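(* Let $M, N, M_{CP}$ be positive integers, $f_c>0$ a carrier frequency, $\Delta f>0$ a subcarrier spacing, $T = 1/\Delta f$, $T_{CP} = \frac{M_{CP}}{M}T$ and $T_u = \frac{M+M_{CP}}{M}T$. Let $X[n,m]\in\mathbb{C}$ for $n=0,\dots,N+1$, $m=0,\dots,M-1$, and let the transmitted baseband waveform be \[ s(t)=\frac{1}{\sqrt{M}}\sum_{n=0}^{N+1}\sum_{m=0}^{M-1}X[n,m]\,g(t-nT_u+T_{CP})\,e^{j2\pi m\Delta f(t-nT_u)}, \] where $g$ is the unit rectangular pulse of duration $T_u$ (equal to $1$ on $[0,T_u)$ and $0$ elsewhere). Define the samples $S[n,l]=s(nT_u+\frac{l}{M}T)=\frac{1}{\sqrt{M}}\sum_{m=0}^{M-1}X[n,m]e^{j2\pi ml/M}$ for $n=0,\dots,N+1$, $l=0,\dots,M-1$. Let the (noise-free) received baseband signal be \[ r(t)=\sum_{i=1}^{N_P}\beta_i\, e^{j2\pi\nu_i t}\, s\!\left(t-\Big(\tau_i-\frac{\nu_i}{f_c}t\Big)\right), \] with path gains $\beta_i\in\mathbb{C}$, delays $\tau_i$ and Doppler shifts $\nu_i$ ($i=1,\dots,N_P$). Set $k_i=\nu_i N T$, $l_i=\tau_i M\Delta f$, and $p_i = f_c/\nu_i$ (with $1/p_i:=0$ if $\nu_i=0$). Assume $l_i\geqslant 1$ and $l_i\leqslant l_{\max}$ for all $i$, where $l_{\max}=\lceil \tau_{\max} M\Delta f\rceil$ with $\tau_{\max}$ the maximum delay; assume $|p_i|>(N+2)M$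 for all $i$; and assume the CP length satisfies $l_{\max}+2\leqslant M_{CP}<M$. Define the received samples $R[n,l]=r(nT_u+\frac{l}{M}T)$. Then for all $n=0,\dots,N+1$ and $l=0,\dots,M-1$, \[ R[n,l]=\sum_{i=1}^{N_P}\sum_{l'=0}^{M-1}h^{i}_{n}[l,l']\,S[n,l'], \] where \[ h^{i}_{n}[l,l']=\beta_i\, e^{j2\pi\frac{n(M+M_{CP})+l}{M}\frac{k_i}{N}\left(1+\frac{(M-1)\Delta f}{2f_c}\right)}\, e^{j\pi\frac{M-1}{M}(l-l'-l_i)}\, \frac{\sin\!\Big(\pi\big(l-l'-l_i+\frac{n(M+M_{CP})+l}{p_i}\big)\Big)}{M\sin\!\Big(\frac{\pi}{M}\big(l-l'-l_i+\frac{n(M+M_{CP})+l}{p_i}\big)\Big)}, \] with the ratio of sines interpreted by continuity (as $M$) when its argument is a multiple of $M$... more precisely, the factor $\frac{\sin(\pi x)}{M\sin(\pi x/M)}$ is understood as its continuous extension $\frac{1}{M}\sum_{m=0}^{M-1}e^{j2\pi m x/M}e^{-j\pi\frac{M-1}{M}x}$.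
   Context: This models a CP-OFDM-based OTFS system in a multipath linear time-variant channel with the Doppler squint effect (the Doppler shift of path $i$ at baseband frequency $f$ is $\frac{\nu_i}{f_c}(f_c+f)$). The $N+2$ OFDM symbols each consist of a cyclic prefix of $M_{CP}$ samples followed by $M$ samples; sampling period is $T/M$. Noise is disregarded. *)

theory Defs
  imports Complex_Main
begin

definition rect :: "real \<Rightarrow> real \<Rightarrow> complex" where
  "rect Tu t = (if 0 \<le> t \<and> t < Tu then 1 else 0)"

definition Tsym :: "real \<Rightarrow> real" where "Tsym df = 1 / df"
definition Tcp :: "nat \<Rightarrow> nat \<Rightarrow> real \<Rightarrow> real" where
  "Tcp M Mcp df = real Mcp / real M * Tsym df"
definition Tu :: "nat \<Rightarrow> nat \<Rightarrow> real \<Rightarrow> real" where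
  "Tu M Mcp df = real (M + Mcp) / real M * Tsym df"

definition tx :: "nat \<Rightarrow> nat \<Rightarrow> nat \<Rightarrow> real \<Rightarrow> (nat \<Rightarrow> nat \<Rightarrow> complex) \<Rightarrow> real \<Rightarrow> complex" where
  "tx M N Mcp df X t =
     (1 / complex_of_real (sqrt (real M))) *
     (\<Sum>n\<le>N+1. \<Sum>m<M. X n m * rect (Tu M Mcp df) (t - real n * Tu M Mcp df + Tcp M Mcp df)
        * cis (2 * pi * real m * df * (t - real n * Tu M Mcp df)))"

definition txS :: "nat \<Rightarrow> nat \<Rightarrow> nat \<Rightarrow> real \<Rightarrow> (nat \<Rightarrow> nat \<Rightarrow> complex) \<Rightarrow> nat \<Rightarrow> nat \<Rightarrow> complex" where
  "txS M N Mcp df X n l = tx M N Mcp df X (real n * Tu M Mcp df + real l / real M * Tsym df)"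

definition rx :: "nat \<Rightarrow> nat \<Rightarrow> nat \<Rightarrow> real \<Rightarrow> real \<Rightarrow> (nat \<Rightarrow> nat \<Rightarrow> complex) \<Rightarrow> nat
    \<Rightarrow> (nat \<Rightarrow> complex) \<Rightarrow> (nat \<Rightarrow> real) \<Rightarrow> (nat \<Rightarrow> real) \<Rightarrow> real \<Rightarrow> complex" where
  "rx M N Mcp df fc X NP beta tau nu t =
     (\<Sum>i\<in>{1..NP}. beta i * cis (2 * pi * nu i * t) * tx M N Mcp df X (t - (tau i - nu i / fc * t)))"

definition rxS where
  "rxS M N Mcp df fc X NP beta tau nu n l =
     rx M N Mcp df fc X NP beta tau nu (real n * Tu M Mcp df + real l / real M * Tsym df)"

text \<open>Continuous extension of sin(pi x)/(M sin(pi x/M)):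
  (1/M) sum_{m<M} e^{j 2 pi m x/M} e^{-j pi (M-1)/M x}.\<close>
definition dirich :: "nat \<Rightarrow> real \<Rightarrow> complex" where
  "dirich M x = (1 / of_nat M) * (\<Sum>m<M. cis (2 * pi * real m * x / real M))
                 * cis (- pi * (real M - 1) / real M * x)"

definition kdop :: "nat \<Rightarrow> real \<Rightarrow> real \<Rightarrow> real" where
  "kdop N df nu = nu * real N * Tsym df"
definition ldel :: "nat \<Rightarrow> real \<Rightarrow> real \<Rightarrow> real" where
  "ldel M df tau = tau * real M * df"
definition invp :: "real \<Rightarrow> real \<Rightarrow> real" where
  "invp fc nu = nu / fc"

definition hcoef :: "nat \<Rightarrow> nat \<Rightarrow> nat \<Rightarrow> real \<Rightarrow> real \<Rightarrow> complex \<Rightarrow> real \<Rightarrow> real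
    \<Rightarrow> nat \<Rightarrow> nat \<Rightarrow> nat \<Rightarrow> complex" where
  "hcoef M N Mcp df fc b tau nu n l l' =
     (let ki = kdop N df nu; li = ldel M df tau;
          q = real (n * (M + Mcp) + l);
          x = real l - real l' - li + q * invp fc nu
      in b * cis (2 * pi * (q / real M) * (ki / real N) * (1 + (real M - 1) * df / (2 * fc)))
           * cis (pi * (real M - 1) / real M * (real l - real l' - li))
           * dirich M x)"

definition lmax :: "nat \<Rightarrow> real \<Rightarrow> nat \<Rightarrow> (nat \<Rightarrow> real) \<Rightarrow> int" where
  "lmax M df NP tau = \<lceil>Max (tau ` {1..NP}) * real M * df\<rceil>"

end

theory Submission
  imports Defs
begin

text \<open>At the sampling instant n T_u + l T/M, path i reads the transmitted waveform at
  n T_u + y T/M with y = l - l_i + (n (M + M_CP) + l)/p_i. The bounds on l_i, p_i and the CP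
  length keep y in [-M_CP, M), so this instant lies in the n-th symbol, cyclic prefix included,
  where s is the trigonometric polynomial M^(-1/2) sum_m X[n,m] e^(j 2 pi m y/M) at the
  fractional index y. By DFT orthogonality this polynomial is interpolated from its values at
  the integers l' < M, which are the samples S[n,l'], with the periodic sinc kernel; the Doppler
  phase and the linear phase of the kernel make up the phase factors of h.\<close>

lemma sum_cis_roots_of_unity:
  fixes k :: int
  assumes "M > 0"
  shows "(\<Sum>l<M. cis (2 * pi * of_int k * real l / real M)) = (if int M dvd k then of_nat M else 0)"
proof -
  define z where "z = cis (2 * pi * of_int k / real M)"
  have powers: "cis (2 * pi * of_int k * real l / real M) = z ^ l" for l
    by (simp add: z_def DeMoivre mult_ac)
  have "z ^ M = cis (2 * pi * of_int k)"
    using assms by (simp add: z_def DeMoivre)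
  then have z_pow_M: "z ^ M = 1" by simp
  have z_eq_1: "z = 1 \<longleftrightarrow> int M dvd k"
  proof
    assume "z = 1"
    then have "cos (2 * pi * of_int k / real M) = 1"
      by (simp add: z_def complex_eq_iff)
    then obtain j :: int where "2 * pi * of_int k / real M = of_int j * 2 * pi"
      using cos_one_2pi_int by blast
    then have "real_of_int k = real_of_int (j * int M)"
      using assms by (simp add: field_simps)
    then show "int M dvd k" by (simp only: of_int_eq_iff) simp
  next
    assume "int M dvd k"
    then obtain j where "k = int M * j" by (elim dvdE)
    then show "z = 1"
      using assms by (simp add: z_def) (metis Ints_of_int cis_multiple_2pi mult.assoc)
  qed
  show ?thesis
  proof (cases "int M dvd k")
    case True
    then show ?thesis using z_eq_1 by (simp add: powers)
  next
    case False
    then show ?thesis using z_eq_1 by (simp add: powers geometric_sum z_pow_M)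
  qed
qed

definition idft :: "nat \<Rightarrow> (nat \<Rightarrow> complex) \<Rightarrow> real \<Rightarrow> complex" where
  "idft M x y = (\<Sum>m<M. x m * cis (2 * pi * real m * y / real M))"

definition interp_kernel :: "nat \<Rightarrow> real \<Rightarrow> complex" where
  "interp_kernel M y = 1 / of_nat M * (\<Sum>m<M. cis (2 * pi * real m * y / real M))"

lemma sum_cis_orthogonal:
  assumes "m < M" "m' < M"
  shows "(\<Sum>l<M. cis (2 * pi * of_int (int m' - int m) * real l / real M))
         = (if m = m' then of_nat M else 0)"
proof -
  have "int M dvd int m' - int m \<longleftrightarrow> m = m'"
    using assms dvd_imp_le_int[of "int m' - int m" "int M"] by (cases "m = m'") auto
  then show ?thesis using sum_cis_roots_of_unity[of M "int m' - int m"] assms by simp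
qed

lemma idft_interpolation:
  assumes "M > 0"
  shows "idft M x y = (\<Sum>l<M. interp_kernel M (y - real l) * idft M x (real l))"
proof -
  define e :: "int \<Rightarrow> nat \<Rightarrow> complex" where "e k l = cis (2 * pi * of_int k * real l / real M)" for k l
  define c :: "nat \<Rightarrow> complex" where "c m = cis (2 * pi * real m * y / real M)" for m
  have phase: "cis (2 * pi * real m * (y - real l) / real M) * (x m' * cis (2 * pi * real m' * real l / real M))
      = x m' * c m * e (int m' - int m) l" for m m' l
    unfolding c_def e_def using assms by (simp add: cis_mult field_simps)
  have orthogonal: "(\<Sum>l<M. e (int m' - int m) l) = (if m = m' then of_nat M else 0)"
    if "m < M" "m' < M" for m m'
    unfolding e_def using that by (rule sum_cis_orthogonal)
  have "(\<Sum>l<M. interp_kernel M (y - real l) * idft M x (real l))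
      = (\<Sum>l<M. 1 / of_nat M * (\<Sum>m<M. \<Sum>m'<M. x m' * c m * e (int m' - int m) l))"
    unfolding interp_kernel_def idft_def by (simp only: mult.assoc[of "1 / of_nat M"] sum_product phase)
  also have "\<dots> = 1 / of_nat M * (\<Sum>l<M. \<Sum>m<M. \<Sum>m'<M. x m' * c m * e (int m' - int m) l)"
    by (simp only: sum_distrib_left)
  also have "\<dots> = 1 / of_nat M * (\<Sum>m<M. \<Sum>l<M. \<Sum>m'<M. x m' * c m * e (int m' - int m) l)"
    by (subst sum.swap) (rule refl)
  also have "\<dots> = 1 / of_nat M * (\<Sum>m<M. \<Sum>m'<M. \<Sum>l<M. x m' * c m * e (int m' - int m) l)"
    by (intro arg_cong[where f = "(*) _"] sum.cong refl sum.swap)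
  also have "\<dots> = 1 / of_nat M * (\<Sum>m<M. \<Sum>m'<M. x m' * c m * (\<Sum>l<M. e (int m' - int m) l))"
    by (simp only: sum_distrib_left)
  also have "\<dots> = 1 / of_nat M * (\<Sum>m<M. of_nat M * (x m * c m))"
    by (intro arg_cong[where f = "(*) _"] sum.cong refl) (simp add: orthogonal if_distrib cong: if_cong)
  also have "\<dots> = idft M x y"
    using assms by (simp add: idft_def c_def sum_distrib_left[symmetric])
  finally show ?thesis ..
qed

lemma rect_symbol_window:
  assumes "M > 0" "df > 0" "- real Mcp \<le> y" "y < real M"
  shows "rect (Tu M Mcp df) (real n * Tu M Mcp df + y / real M * Tsym df - real n' * Tu M Mcp df + Tcp M Mcp df)
         = (if n' = n then 1 else 0)"
proof -
  define A where "A = (real n - real n') * (real M + real Mcp) + y + real Mcp"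
  have scale: "real M * df > 0" using assms by simp
  have time: "real n * Tu M Mcp df + y / real M * Tsym df - real n' * Tu M Mcp df + Tcp M Mcp df
      = A / (real M * df)"
    using assms by (simp add: A_def Tu_def Tcp_def Tsym_def field_simps)
  have duration: "Tu M Mcp df = (real M + real Mcp) / (real M * df)"
    using assms by (simp add: Tu_def Tsym_def)
  have "rect (Tu M Mcp df) (real n * Tu M Mcp df + y / real M * Tsym df - real n' * Tu M Mcp df + Tcp M Mcp df)
      = (if 0 \<le> A \<and> A < real M + real Mcp then 1 else 0)"
    unfolding rect_def time unfolding duration using scale by (auto simp: divide_less_cancel zero_le_divide_iff)
  moreover have "0 \<le> A \<and> A < real M + real Mcp \<longleftrightarrow> n' = n"
  proof (cases "n' = n")
    case False
    then have "real n - real n' \<ge> 1 \<or> real n - real n' \<le> -1" by linarith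
    then have "(real n - real n') * (real M + real Mcp) \<ge> real M + real Mcp
        \<or> (real n - real n') * (real M + real Mcp) \<le> - (real M + real Mcp)"
      by (metis add_nonneg_nonneg mult_1 mult_minus_left mult_right_mono of_nat_0_le_iff)
    with False show ?thesis using assms unfolding A_def by linarith
  qed (use assms in \<open>simp add: A_def\<close>)
  ultimately show ?thesis by simp
qed

lemma tx_within_symbol:
  assumes "M > 0" "df > 0" "n \<le> N + 1" "- real Mcp \<le> y" "y < real M"
  shows "tx M N Mcp df X (real n * Tu M Mcp df + y / real M * Tsym df)
         = idft M (X n) y / complex_of_real (sqrt (real M))"
proof -
  define t where "t = real n * Tu M Mcp df + y / real M * Tsym df"
  have window: "rect (Tu M Mcp df) (t - real n' * Tu M Mcp df + Tcp M Mcp df) = (if n' = n then 1 else 0)" for n'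
    unfolding t_def using assms(1,2,4,5) by (rule rect_symbol_window)
  have phase: "2 * pi * real m * df * (t - real n * Tu M Mcp df) = 2 * pi * real m * y / real M" for m
    using assms by (simp add: t_def Tsym_def field_simps)
  have "tx M N Mcp df X t
      = 1 / complex_of_real (sqrt (real M)) * (\<Sum>n'\<le>N + 1. if n' = n then idft M (X n) y else 0)"
    unfolding tx_def by (intro arg_cong[where f = "(*) _"] sum.cong refl) (simp add: window phase idft_def)
  also have "\<dots> = idft M (X n) y / complex_of_real (sqrt (real M))"
    using assms by simp
  finally show ?thesis unfolding t_def .
qed

lemma txS_eq_idft:
  assumes "M > 0" "df > 0" "n \<le> N + 1" "l < M"
  shows "txS M N Mcp df X n l = idft M (X n) (real l) / complex_of_real (sqrt (real M))"
  unfolding txS_def using assms by (intro tx_within_symbol) simp_all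

lemma dirich_eq_interp_kernel:
  "dirich M x = interp_kernel M x * cis (- pi * (real M - 1) / real M * x)"
  by (simp add: dirich_def interp_kernel_def)

lemma hcoef_eq_interp_kernel:
  assumes "M > 0" "N > 0" "df > 0" "fc > 0"
  shows "hcoef M N Mcp df fc b tau nu n l l' =
     b * cis (2 * pi * nu * (real n * Tu M Mcp df + real l / real M * Tsym df))
       * interp_kernel M (real l - ldel M df tau + real (n * (M + Mcp) + l) * invp fc nu - real l')"
proof -
  define q where "q = real (n * (M + Mcp) + l)"
  define x where "x = real l - real l' - ldel M df tau + q * invp fc nu"
  have "cis (2 * pi * (q / real M) * (kdop N df nu / real N) * (1 + (real M - 1) * df / (2 * fc)))
        * cis (pi * (real M - 1) / real M * (real l - real l' - ldel M df tau))
        * cis (- pi * (real M - 1) / real M * x)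
      = cis (2 * pi * nu * (real n * Tu M Mcp df + real l / real M * Tsym df))"
    unfolding cis_mult x_def q_def kdop_def invp_def Tu_def Tsym_def
    using assms by (intro arg_cong[where f = cis]) (simp add: field_simps)
  moreover have "x = real l - ldel M df tau + q * invp fc nu - real l'"
    by (simp add: x_def)
  ultimately show ?thesis
    unfolding hcoef_def Let_def dirich_eq_interp_kernel q_def[symmetric] x_def[symmetric]
    by (simp add: mult_ac)
qed

lemma abs_mult_invp_less_2:
  fixes q K :: real
  assumes "0 \<le> q" "q \<le> 2 * K" "nu = 0 \<or> \<bar>fc / nu\<bar> > K"
  shows "\<bar>q * invp fc nu\<bar> < 2"
proof (cases "nu = 0")
  case False
  then have "\<bar>fc / nu\<bar> > K" using assms(3) by simp
  then have "q < 2 * \<bar>fc / nu\<bar>" "\<bar>fc / nu\<bar> > 0" using assms(1,2) by linarith+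
  moreover have "\<bar>q * invp fc nu\<bar> = q / \<bar>fc / nu\<bar>"
    using assms(1) by (simp add: invp_def abs_mult)
  ultimately show ?thesis by (metis pos_divide_less_eq mult.commute)
qed (simp add: invp_def)

lemma path_sample_expansion:
  fixes M N Mcp n l :: nat and df fc tau nu :: real and b :: complex
  defines "t \<equiv> real n * Tu M Mcp df + real l / real M * Tsym df"
    and "y \<equiv> real l - ldel M df tau + real (n * (M + Mcp) + l) * invp fc nu"
  assumes pos: "M > 0" "N > 0" "df > 0" "fc > 0" and n: "n \<le> N + 1"
    and window: "- real Mcp \<le> y" "y < real M"
  shows "b * cis (2 * pi * nu * t) * tx M N Mcp df X (t - (tau - nu / fc * t))
         = (\<Sum>l'<M. hcoef M N Mcp df fc b tau nu n l l' * txS M N Mcp df X n l')"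
proof -
  have delayed_time: "t - (tau - nu / fc * t) = real n * Tu M Mcp df + y / real M * Tsym df"
    unfolding t_def y_def ldel_def invp_def Tu_def Tsym_def using pos by (simp add: field_simps)
  have "(\<Sum>l'<M. hcoef M N Mcp df fc b tau nu n l l' * txS M N Mcp df X n l')
      = (\<Sum>l'<M. b * cis (2 * pi * nu * t) * interp_kernel M (y - real l')
                  * (idft M (X n) (real l') / complex_of_real (sqrt (real M))))"
    by (intro sum.cong refl)
      (simp only: hcoef_eq_interp_kernel[OF pos] txS_eq_idft[OF pos(1,3) n] lessThan_iff
        t_def[symmetric] y_def[symmetric])
  also have "\<dots> = b * cis (2 * pi * nu * t) / complex_of_real (sqrt (real M))
                  * (\<Sum>l'<M. interp_kernel M (y - real l') * idft M (X n) (real l'))"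
    by (simp add: sum_distrib_left sum_divide_distrib mult_ac)
  also have "\<dots> = b * cis (2 * pi * nu * t) / complex_of_real (sqrt (real M)) * idft M (X n) y"
    by (simp only: idft_interpolation[OF pos(1), symmetric])
  also have "\<dots> = b * cis (2 * pi * nu * t) * tx M N Mcp df X (t - (tau - nu / fc * t))"
    unfolding delayed_time tx_within_symbol[OF pos(1,3) n window] by simp
  finally show ?thesis ..
qed

theorem theorem1:
  fixes M N Mcp NP :: nat and fc df :: real
    and X :: "nat \<Rightarrow> nat \<Rightarrow> complex"
    and beta :: "nat \<Rightarrow> complex" and tau nu :: "nat \<Rightarrow> real"
  assumes "M > 0" and "N > 0" and "Mcp > 0" and "fc > 0" and "df > 0"
    and "\<forall>i\<in>{1..NP}. ldel M df (tau i) \<ge> 1 \<and> ldel M df (tau i) \<le> real_of_int (lmax M df NP tau)"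
    and "\<forall>i\<in>{1..NP}. nu i = 0 \<or> \<bar>fc / nu i\<bar> > real ((N + 2) * M)"
    and "lmax M df NP tau + 2 \<le> int Mcp" and "Mcp < M"
  shows "\<forall>n\<le>N+1. \<forall>l<M.
           rxS M N Mcp df fc X NP beta tau nu n l =
           (\<Sum>i\<in>{1..NP}. \<Sum>l'<M. hcoef M N Mcp df fc (beta i) (tau i) (nu i) n l l' * txS M N Mcp df X n l')"
proof (intro allI impI)
  fix n l assume n: "n \<le> N + 1" and l: "l < M"
  have "n * (M + Mcp) + l \<le> (N + 1) * (2 * M) + M"
    using n l \<open>Mcp < M\<close> by (intro add_mono mult_mono) auto
  also have "\<dots> \<le> 2 * ((N + 2) * M)" by (simp add: algebra_simps)
  finally have sample_index: "real (n * (M + Mcp) + l) \<le> 2 * real ((N + 2) * M)"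
    by (metis of_nat_le_iff of_nat_mult of_nat_numeral)
  have delay_bounds: "1 \<le> ldel M df (tau i) \<and> ldel M df (tau i) \<le> real Mcp - 2" if "i \<in> {1..NP}" for i
    using assms(6,8) that by force
  have path: "beta i * cis (2 * pi * nu i * t) * tx M N Mcp df X (t - (tau i - nu i / fc * t))
      = (\<Sum>l'<M. hcoef M N Mcp df fc (beta i) (tau i) (nu i) n l l' * txS M N Mcp df X n l')"
    if i: "i \<in> {1..NP}" and t: "t = real n * Tu M Mcp df + real l / real M * Tsym df" for i t
    unfolding t
  proof (rule path_sample_expansion[OF assms(1,2,5,4) n])
    have "\<bar>real (n * (M + Mcp) + l) * invp fc (nu i)\<bar> < 2"
      using sample_index assms(7) i by (intro abs_mult_invp_less_2) auto
    then show "- real Mcp \<le> real l - ldel M df (tau i) + real (n * (M + Mcp) + l) * invp fc (nu i)"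
      and "real l - ldel M df (tau i) + real (n * (M + Mcp) + l) * invp fc (nu i) < real M"
      using delay_bounds[OF i] l by linarith+
  qed
  show "rxS M N Mcp df fc X NP beta tau nu n l =
      (\<Sum>i\<in>{1..NP}. \<Sum>l'<M. hcoef M N Mcp df fc (beta i) (tau i) (nu i) n l l' * txS M N Mcp df X n l')"
    unfolding rxS_def rx_def using path by (intro sum.cong) auto
qed

end
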